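(* Let $T\subset\mathbb{R}^2$ be a convex polytope and $\Delta\subset\mathbb{R}^2$ a triangle. Let $(\lambda^*,u^* )$ be an optimal solution of the problem: maximize $\lambda$ subject to $\lambda\ge 0$, $u\in\mathbb{R}^2$, $\lambda\Delta+u\subseteq T$. If there exists a $(\Delta,T)$-inbody, then $S^*=\lambda^*\Delta+u^*$ is the only $(\Delta,T)$-inbody.
   Context: A triangle is the convex hull of three affinely independent points. For a convex set $C$ and $z\in\partial C$, $N_C(z)=\{v:\langle v,y-z\rangle\le 0\ \forall y\in C\}$. For a triangle $\Delta\subseteq\mathbb{R}^2$ and a nonempty convex set $T\subseteq\mathbb{R}^2$, a $(\Delta,T)$-inbody is a set $S\subseteq\mathbb{R}^2$ such that: (i) $S=\lambda\Delta+u$ for some $\lambda>0$, $u\in\mathbb{R}^2$; (ii) all three vertices of $S$ lie in $\partial T$; (iii) if $v_1,v_2,v_3$ are the vertices of $S$, there is no line $H$ through the origin such that $N_T(v_1)\cup N_T(v_2)\cup N_T(v_3)$ is contained in one of the two closed half-planes bounded by $H$. *)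

theory Defs
  imports "HOL-Analysis.Analysis"
begin

definition is_triangle :: "(real^2) set \<Rightarrow> bool" where
  "is_triangle D \<longleftrightarrow> (\<exists>a b c. a \<noteq> b \<and> a \<noteq> c \<and> b \<noteq> c \<and>
      \<not> affine_dependent {a, b, c} \<and> D = convex hull {a, b, c})"

definition homothet :: "real \<Rightarrow> real^2 \<Rightarrow> (real^2) set \<Rightarrow> (real^2) set" where
  "homothet lam u D = (\<lambda>x. lam *\<^sub>R x + u) ` D"

definition normal_cone :: "(real^2) set \<Rightarrow> real^2 \<Rightarrow> (real^2) set" where
  "normal_cone C z = {v. \<forall>y\<in>C. v \<bullet> (y - z) \<le> 0}"

text \<open>Condition (iii): no line
  through the origin (with normal w \<noteq> 0) has the union of normal cones in one of
  its closed half-planes {x. w \<bullet> x \<le> 0} (the other half-plane is obtained from -w).\<close>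
definition inbody :: "(real^2) set \<Rightarrow> (real^2) set \<Rightarrow> (real^2) set \<Rightarrow> bool" where
  "inbody D T S \<longleftrightarrow>
     (\<exists>lam u. lam > 0 \<and> S = homothet lam u D) \<and>
     (\<forall>v. v extreme_point_of S \<longrightarrow> v \<in> frontier T) \<and>
     \<not> (\<exists>w. w \<noteq> 0 \<and>
          (\<forall>v. v extreme_point_of S \<longrightarrow> (\<forall>n\<in>normal_cone T v. w \<bullet> n \<le> 0)))"

end

theory Submission
  imports Defs
begin

text \<open>Let \<open>S = \<lambda>\<Delta> + u\<close> be an inbody with vertex map \<open>f\<close>, and let \<open>\<lambda>'\<Delta> + u' \<subseteq> T\<close> with vertex
  map \<open>g\<close>. Every normal \<open>n\<close> of \<open>T\<close> at a vertex \<open>f x\<close> satisfies \<open>n \<bullet> (g x - f x) \<le> 0\<close>. For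
  \<open>\<lambda>' = \<lambda>\<close> the difference \<open>g x - f x = u' - u\<close> is constant, so all these normals lie in one
  half-plane unless \<open>u' = u\<close>. For \<open>\<lambda>' > \<lambda>\<close>, pick an interior point \<open>c\<close> of \<open>T\<close>: the vector
  \<open>(\<lambda>' - \<lambda>)(c - f x) + \<lambda>(g x - f x)\<close> does not depend on \<open>x\<close>, and every normal has negative
  inner product with it, again contradicting condition (iii).\<close>

definition normal_cones_surround :: "(real^2) set \<Rightarrow> (real^2) set \<Rightarrow> bool" where
  "normal_cones_surround T V \<longleftrightarrow>
     (\<forall>w. w \<noteq> 0 \<longrightarrow> (\<exists>v\<in>V. \<exists>n\<in>normal_cone T v. 0 < w \<bullet> n))"

lemma homothet_eq_affinity: "homothet lam u S = (\<lambda>x. u + lam *\<^sub>R x) ` S"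
  unfolding homothet_def by (simp add: add.commute)

lemma convex_hull_homothet: "convex hull (homothet lam u S) = homothet lam u (convex hull S)"
  unfolding homothet_eq_affinity by (rule convex_hull_affinity)

lemma affine_independent_homothet:
  assumes "lam \<noteq> 0" and "\<not> affine_dependent S"
  shows "\<not> affine_dependent (homothet lam u S)"
proof -
  have inj: "inj (\<lambda>x::real^2. lam *\<^sub>R x)"
    using assms(1) by (simp add: inj_def)
  have "homothet lam u S = (+) u ` ((\<lambda>x. lam *\<^sub>R x) ` S)"
    unfolding homothet_eq_affinity by auto
  then have "aff_dim (homothet lam u S) = aff_dim S"
    using aff_dim_injective_linear_image[OF linear_scaleR inj] by (simp add: aff_dim_translation_eq)
  moreover have "card (homothet lam u S) = card S"
    unfolding homothet_def using assms(1) by (simp add: card_image inj_on_def)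
  ultimately show ?thesis
    using assms(2) by (simp add: affine_independent_iff_card homothet_def)
qed

lemma extreme_point_of_homothet_affine_independent:
  assumes "lam \<noteq> 0" and "\<not> affine_dependent P"
  shows "v extreme_point_of homothet lam u (convex hull P) \<longleftrightarrow> v \<in> homothet lam u P"
  using extreme_point_of_convex_hull_affine_independent[OF affine_independent_homothet[OF assms]]
  by (simp add: convex_hull_homothet)

lemma interior_convex_hull_affine_independent_nonempty:
  fixes S :: "'a::euclidean_space set"
  assumes "\<not> affine_dependent S" and "card S = DIM('a) + 1"
  shows "interior (convex hull S) \<noteq> {}"
proof -
  have "aff_dim (convex hull S) = DIM('a)"
    using assms by (simp add: aff_dim_convex_hull affine_independent_iff_card)
  then have "rel_interior (convex hull S) = interior (convex hull S)"
    by (simp add: rel_interior_interior aff_dim_eq_full)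
  moreover have "S \<noteq> {}"
    using assms(2) by auto
  ultimately show ?thesis
    by (metis convex_convex_hull convex_hull_eq_empty rel_interior_eq_empty)
qed

lemma interior_homothet_triangle_nonempty:
  assumes "is_triangle D" and "lam > 0"
  shows "interior (homothet lam u D) \<noteq> {}"
proof -
  obtain a b c where abc: "a \<noteq> b" "a \<noteq> c" "b \<noteq> c" "\<not> affine_dependent {a, b, c}"
    and D: "D = convex hull {a, b, c}"
    using assms(1) unfolding is_triangle_def by blast
  have "\<not> affine_dependent (homothet lam u {a, b, c})"
    using affine_independent_homothet abc(4) assms(2) by simp
  moreover have "card (homothet lam u {a, b, c}) = DIM(real^2) + 1"
    using abc(1-3) assms(2) by (simp add: homothet_def)
  ultimately have "interior (convex hull (homothet lam u {a, b, c})) \<noteq> {}"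
    by (rule interior_convex_hull_affine_independent_nonempty)
  then show ?thesis
    by (simp add: D convex_hull_homothet)
qed

lemma normal_cone_inner_interior_less:
  assumes "c \<in> interior T" and "n \<in> normal_cone T v" and "n \<noteq> 0"
  shows "n \<bullet> (c - v) < 0"
proof -
  obtain r where "r > 0" and r: "ball c r \<subseteq> T"
    using assms(1) mem_interior by blast
  define e where "e = r / (2 * norm n)"
  have e: "e > 0"
    using \<open>r > 0\<close> assms(3) by (simp add: e_def)
  have "dist c (c + e *\<^sub>R n) < r"
    using \<open>r > 0\<close> assms(3) e by (simp add: dist_norm e_def)
  then have "c + e *\<^sub>R n \<in> T"
    using r by auto
  then have "n \<bullet> (c + e *\<^sub>R n - v) \<le> 0"
    using assms(2) unfolding normal_cone_def by blast
  then have "n \<bullet> (c - v) \<le> - e * (n \<bullet> n)"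
    by (simp add: inner_diff_right inner_add_right algebra_simps)
  also have "\<dots> < 0"
    using e assms(3) by simp
  finally show ?thesis .
qed

lemma inbody_homothet_affine_independent:
  assumes "lam > 0" and "\<not> affine_dependent P"
  shows "inbody (convex hull P) T (homothet lam u (convex hull P)) \<longleftrightarrow>
           homothet lam u P \<subseteq> frontier T \<and> normal_cones_surround T (homothet lam u P)"
proof -
  have ext: "v extreme_point_of homothet lam u (convex hull P) \<longleftrightarrow> v \<in> homothet lam u P" for v
    using extreme_point_of_homothet_affine_independent assms by simp
  show ?thesis
    using assms(1) unfolding inbody_def normal_cones_surround_def
    by (simp only: ext) (fastforce simp: not_le inner_commute)
qed

lemma homothet_translation_eq_if_normal_cones_surround:
  assumes "normal_cones_surround T (homothet lam u P)" and "homothet lam u' P \<subseteq> T"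
  shows "u' = u"
proof (rule ccontr)
  assume "u' \<noteq> u"
  then have "u' - u \<noteq> 0"
    by simp
  then obtain x n where "x \<in> P" and n: "n \<in> normal_cone T (lam *\<^sub>R x + u)" and "0 < (u' - u) \<bullet> n"
    using assms(1) unfolding normal_cones_surround_def homothet_def by blast
  moreover have "lam *\<^sub>R x + u' \<in> T"
    using assms(2) \<open>x \<in> P\<close> unfolding homothet_def by blast
  ultimately show False
    using n unfolding normal_cone_def by (force simp: inner_commute)
qed

lemma homothet_scale_le_if_normal_cones_surround:
  assumes c: "c \<in> interior T" and "lam \<ge> 0"
    and surround: "normal_cones_surround T (homothet lam u P)"
    and sub: "homothet lam' u' P \<subseteq> T"
  shows "lam' \<le> lam"
proof (rule ccontr)
  assume "\<not> lam' \<le> lam"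
  define t where "t = lam' - lam"
  have "t > 0"
    using \<open>\<not> lam' \<le> lam\<close> by (simp add: t_def)
  define w where "w = t *\<^sub>R (c - u) + lam *\<^sub>R (u' - u)"
  have neg: "n \<bullet> w < 0" if "x \<in> P" "n \<in> normal_cone T (lam *\<^sub>R x + u)" "n \<noteq> 0" for x n
  proof -
    have "w = t *\<^sub>R (c - (lam *\<^sub>R x + u)) + lam *\<^sub>R ((lam' *\<^sub>R x + u') - (lam *\<^sub>R x + u))"
      unfolding w_def t_def by (simp add: algebra_simps)
    moreover have "n \<bullet> (c - (lam *\<^sub>R x + u)) < 0"
      using normal_cone_inner_interior_less[OF c that(2,3)] .
    moreover have "lam' *\<^sub>R x + u' \<in> T"
      using sub that(1) unfolding homothet_def by blast
    then have "n \<bullet> ((lam' *\<^sub>R x + u') - (lam *\<^sub>R x + u)) \<le> 0"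
      using that(2) unfolding normal_cone_def by blast
    ultimately show ?thesis
      using \<open>t > 0\<close> \<open>lam \<ge> 0\<close>
      by (simp add: inner_add_right mult_pos_neg add_neg_nonpos mult_nonneg_nonpos)
  qed
  have "(axis 1 1 :: real^2) \<noteq> 0"
    by (simp add: axis_eq_0_iff)
  then obtain x n where "x \<in> P" "n \<in> normal_cone T (lam *\<^sub>R x + u)" "0 < axis 1 1 \<bullet> n"
    using surround unfolding normal_cones_surround_def homothet_def by blast
  then have "n \<bullet> w < 0"
    using neg by fastforce
  then have "w \<noteq> 0"
    by auto
  then obtain x' n' where "x' \<in> P" "n' \<in> normal_cone T (lam *\<^sub>R x' + u)" "0 < w \<bullet> n'"
    using surround unfolding normal_cones_surround_def homothet_def by blast
  then show False
    using neg[of x' n'] by (force simp: inner_commute)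
qed

lemma inbody_triangle_maximal_homothet:
  assumes "convex T" and "closed T" and "is_triangle D" and "lam > 0"
    and inb: "inbody D T (homothet lam u D)"
  shows "homothet lam u D \<subseteq> T"
    and "homothet lam' u' D \<subseteq> T \<Longrightarrow> lam' \<le> lam"
    and "homothet lam u' D \<subseteq> T \<Longrightarrow> u' = u"
proof -
  obtain P where indep: "\<not> affine_dependent P" and D: "D = convex hull P"
    using assms(3) unfolding is_triangle_def by blast
  have front: "homothet lam u P \<subseteq> frontier T"
    and surround: "normal_cones_surround T (homothet lam u P)"
    using inb inbody_homothet_affine_independent[OF assms(4) indep] D by auto
  have "homothet lam u P \<subseteq> T"
    using front assms(2) frontier_subset_closed by blast
  then show "homothet lam u D \<subseteq> T"
    unfolding D convex_hull_homothet[symmetric] using assms(1) by (simp add: hull_minimal)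
  then obtain c where c: "c \<in> interior T"
    using interior_homothet_triangle_nonempty[OF assms(3,4)] interior_mono by blast
  have hull_sub: "homothet l v P \<subseteq> T" if "homothet l v D \<subseteq> T" for l v
    using that unfolding D homothet_def by (auto intro: hull_inc)
  show "homothet lam' u' D \<subseteq> T \<Longrightarrow> lam' \<le> lam"
    using homothet_scale_le_if_normal_cones_surround[OF c less_imp_le[OF assms(4)] surround] hull_sub
    by blast
  show "homothet lam u' D \<subseteq> T \<Longrightarrow> u' = u"
    using homothet_translation_eq_if_normal_cones_surround[OF surround] hull_sub by blast
qed

theorem proposition7p3:
  fixes T D :: "(real^2) set" and lam0 :: real and u0 :: "real^2"
  assumes "polytope T"
    and "is_triangle D"
    and "lam0 \<ge> 0" and "homothet lam0 u0 D \<subseteq> T"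
    and "\<forall>lam u. lam \<ge> 0 \<and> homothet lam u D \<subseteq> T \<longrightarrow> lam \<le> lam0"
    and "\<exists>S. inbody D T S"
  shows "inbody D T (homothet lam0 u0 D) \<and>
         (\<forall>S. inbody D T S \<longrightarrow> S = homothet lam0 u0 D)"
proof -
  have T: "convex T" "closed T"
    using assms(1) polytope_imp_convex polytope_imp_closed by auto
  have uniq: "S = homothet lam0 u0 D" if inb: "inbody D T S" for S
  proof -
    obtain lam u where lam: "lam > 0" and S: "S = homothet lam u D"
      using inb unfolding inbody_def by blast
    note maximal = inbody_triangle_maximal_homothet[OF T assms(2) lam inb[unfolded S]]
    have "lam \<le> lam0"
      using assms(5) maximal(1) lam by (meson less_imp_le)
    then have "lam = lam0"
      using maximal(2)[OF assms(4)] by simp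
    then show ?thesis
      using S maximal(3) assms(4) by simp
  qed
  then show ?thesis
    using assms(6) by metis
qed

end
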